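(* Let $u,v,w\in V$. If $u$ and $v$ are epistatically equivalent and $u\rightarrow w$, then $v\rightarrow w$.
   Context: Fix $\ell\ge1$, loci $V=\{0,\dots,\ell-1\}$, chromosomes $\vec y\in\{0,1\}^V$, fitness $f:\{0,1\}^V\to\mathbb R$ (maximized) with unique global maximizer $g$. For an assignment $A$ (a set of locus–allele pairs with at most one pair per locus, coverage $\mathcal C(A)$), $\Psi_A$ is the set of chromosomes agreeing with $A$ on $\mathcal C(A)$ with maximum fitness among such chromosomes, and $\Psi_A[v]=\{\psi_v:\psi\in\Psi_A\}$. For $u\neq v$, $u$ is strictly epistatic to $v$, written $u\rightarrow v$, iff $\Psi_{\{(u,1-g[u])\}}[v]=\{1-g[v]\}$. $u$ and $v$ are epistatically equivalent if $u\rightarrow v$ and $v\rightarrow u$. *)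

theory Defs
  imports Complex_Main
begin

text \<open>Loci are V = {0..<l}. A chromosome is a function from loci to alleles,
  alleles 0/1 encoded as False/True, normalised to False outside V.\<close>

definition chroms :: "nat \<Rightarrow> (nat \<Rightarrow> bool) set" where
  "chroms l = {y. \<forall>i. i \<ge> l \<longrightarrow> y i = False}"

text \<open>An assignment is a partial map from loci to alleles (at most one allele per locus);
  its coverage is its domain.\<close>

definition agrees :: "(nat \<rightharpoonup> bool) \<Rightarrow> (nat \<Rightarrow> bool) \<Rightarrow> bool" where
  "agrees A y \<longleftrightarrow> (\<forall>i \<in> dom A. A i = Some (y i))"

definition Psi :: "nat \<Rightarrow> ((nat \<Rightarrow> bool) \<Rightarrow> real) \<Rightarrow> (nat \<rightharpoonup> bool) \<Rightarrow> (nat \<Rightarrow> bool) set" where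
  "Psi l f A = {y \<in> chroms l. agrees A y \<and>
      (\<forall>z \<in> chroms l. agrees A z \<longrightarrow> f z \<le> f y)}"

definition Psi_at :: "nat \<Rightarrow> ((nat \<Rightarrow> bool) \<Rightarrow> real) \<Rightarrow> (nat \<rightharpoonup> bool) \<Rightarrow> nat \<Rightarrow> bool set" where
  "Psi_at l f A v = (\<lambda>y. y v) ` Psi l f A"

definition unique_global_max :: "nat \<Rightarrow> ((nat \<Rightarrow> bool) \<Rightarrow> real) \<Rightarrow> (nat \<Rightarrow> bool) \<Rightarrow> bool" where
  "unique_global_max l f g \<longleftrightarrow> g \<in> chroms l \<and> (\<forall>y \<in> chroms l. y \<noteq> g \<longrightarrow> f y < f g)"

definition strictly_epistatic ::
  "nat \<Rightarrow> ((nat \<Rightarrow> bool) \<Rightarrow> real) \<Rightarrow> (nat \<Rightarrow> bool) \<Rightarrow> nat \<Rightarrow> nat \<Rightarrow> bool" where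
  "strictly_epistatic l f g u v \<longleftrightarrow>
     u < l \<and> v < l \<and> u \<noteq> v \<and> Psi_at l f [u \<mapsto> \<not> g u] v = {\<not> g v}"

definition epist_equiv ::
  "nat \<Rightarrow> ((nat \<Rightarrow> bool) \<Rightarrow> real) \<Rightarrow> (nat \<Rightarrow> bool) \<Rightarrow> nat \<Rightarrow> nat \<Rightarrow> bool" where
  "epist_equiv l f g u v \<longleftrightarrow> strictly_epistatic l f g u v \<and> strictly_epistatic l f g v u"

end

theory Submission
  imports Defs
begin

text \<open>If u and v are epistatically equivalent, then the fittest chromosomes with u flipped
  are exactly the fittest chromosomes with v flipped: a best chromosome with u flipped has v
  flipped, so it competes among those, and vice versa.\<close>

lemma agrees_singleton [simp]: "agrees [u \<mapsto> b] y \<longleftrightarrow> y u = b"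
  unfolding agrees_def by auto

lemma Psi_singleton_subset:
  assumes uv: "Psi_at l f [u \<mapsto> a] v = {b}"
    and vu: "Psi_at l f [v \<mapsto> b] u \<subseteq> {a}"
  shows "Psi l f [v \<mapsto> b] \<subseteq> Psi l f [u \<mapsto> a]"
proof
  fix y assume y: "y \<in> Psi l f [v \<mapsto> b]"
  obtain x where x: "x \<in> Psi l f [u \<mapsto> a]"
    using uv unfolding Psi_at_def by blast
  have "x v = b" using uv x unfolding Psi_at_def by blast
  then have "f x \<le> f y" using x y unfolding Psi_def by auto
  moreover have "y u = a" using vu y unfolding Psi_at_def by blast
  ultimately show "y \<in> Psi l f [u \<mapsto> a]"
    using x y unfolding Psi_def by (auto intro: order_trans)
qed

lemma epist_equiv_Psi_eq:
  assumes "epist_equiv l f g u v"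
  shows "Psi l f [u \<mapsto> \<not> g u] = Psi l f [v \<mapsto> \<not> g v]"
proof -
  have "Psi_at l f [u \<mapsto> \<not> g u] v = {\<not> g v}" "Psi_at l f [v \<mapsto> \<not> g v] u = {\<not> g u}"
    using assms unfolding epist_equiv_def strictly_epistatic_def by auto
  then show ?thesis
    using Psi_singleton_subset by (metis equalityI order_refl)
qed

theorem lemma5:
  fixes l :: nat and f :: "(nat \<Rightarrow> bool) \<Rightarrow> real" and g :: "nat \<Rightarrow> bool"
    and u v w :: nat
  assumes "l \<ge> 1"
    and "unique_global_max l f g"
    and "u < l" and "v < l" and "w < l" and "v \<noteq> w"
    and "epist_equiv l f g u v"
    and "strictly_epistatic l f g u w"
  shows "strictly_epistatic l f g v w"
proof -
  have "Psi_at l f [v \<mapsto> \<not> g v] w = Psi_at l f [u \<mapsto> \<not> g u] w"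
    using epist_equiv_Psi_eq[OF assms(7)] unfolding Psi_at_def by simp
  then show ?thesis
    using assms(4-6,8) unfolding strictly_epistatic_def by simp
qed

end
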